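(* Let $0\to M\xrightarrow{i}\Lambda\xrightarrow{d}B\to0$ be an exact sequence of lattices, $P\subset\Lambda_\mathbb{Q}$ a polyhedron, and $F\subset P$ an $M$-stable face. Then $(N_{F_M}P_M)^\vee=(N_FP)^\vee\cap M_\mathbb{Q}$.
   Context: Notation: $P_M=P\cap M_\mathbb{Q}$, $F_M=F\cap M_\mathbb{Q}$ (identifying $M$ with $i(M)$). For $y\in\Lambda^\vee_\mathbb{Q}$, $\mathrm{face}_y(P)=\{x\in P:\langle x,y\rangle=\min_P\langle-,y\rangle\}$; faces are the nonempty sets of this form; $N_FP=\{y\in\Lambda^\vee_\mathbb{Q}:\mathrm{face}_y(P)\supset F\}$, and analogously $N_{F_M}P_M\subset M^\vee_\mathbb{Q}$. For a cone $\sigma$ in a dual space, $\sigma^\vee$ denotes the dual cone $\{x:\langle x,\sigma\rangle\ge0\}$. $\langle F\rangle$ is the span of the differences of elements of $F$; $F$ is $M$-stable if the relative interior of $F$ meets $M_\mathbb{Q}$ and $\langle F\rangle+M_\mathbb{Q}=\Lambda_\mathbb{Q}$. *)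

theory Defs
  imports Complex_Main
begin

text \<open>Coordinates: a lattice of rank k is identified with Z^k, its rationalisation
with Q^k.  Vectors are functions nat => _ vanishing outside {..<k}.
Integer matrices are functions nat => nat => int (row, column).\<close>

definition zvec :: "nat \<Rightarrow> (nat \<Rightarrow> int) set" where
  "zvec k = {x. \<forall>i\<ge>k. x i = 0}"

definition qvec :: "nat \<Rightarrow> (nat \<Rightarrow> rat) set" where
  "qvec k = {x. \<forall>i\<ge>k. x i = 0}"

definition mapZ :: "nat \<Rightarrow> nat \<Rightarrow> (nat \<Rightarrow> nat \<Rightarrow> int) \<Rightarrow> (nat \<Rightarrow> int) \<Rightarrow> (nat \<Rightarrow> int)" where
  "mapZ n m A x = (\<lambda>i. if i < n then (\<Sum>j<m. A i j * x j) else 0)"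

definition mapQ :: "nat \<Rightarrow> nat \<Rightarrow> (nat \<Rightarrow> nat \<Rightarrow> int) \<Rightarrow> (nat \<Rightarrow> rat) \<Rightarrow> (nat \<Rightarrow> rat)" where
  "mapQ n m A x = (\<lambda>i. if i < n then (\<Sum>j<m. of_int (A i j) * x j) else 0)"

definition short_exact :: "nat \<Rightarrow> nat \<Rightarrow> nat \<Rightarrow> (nat \<Rightarrow> nat \<Rightarrow> int) \<Rightarrow> (nat \<Rightarrow> nat \<Rightarrow> int) \<Rightarrow> bool" where
  "short_exact m n b i d \<longleftrightarrow>
     inj_on (mapZ n m i) (zvec m) \<and>
     mapZ b n d ` zvec n = zvec b \<and>
     {x \<in> zvec n. mapZ b n d x = (\<lambda>_. 0)} = mapZ n m i ` zvec m"

definition pair :: "nat \<Rightarrow> (nat \<Rightarrow> rat) \<Rightarrow> (nat \<Rightarrow> rat) \<Rightarrow> rat" where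
  "pair k x y = (\<Sum>i<k. x i * y i)"

definition polyhedron :: "nat \<Rightarrow> (nat \<Rightarrow> rat) set \<Rightarrow> bool" where
  "polyhedron k P \<longleftrightarrow> (\<exists>H. finite H \<and> (\<forall>(a, c)\<in>H. a \<in> qvec k) \<and>
      P = {x \<in> qvec k. \<forall>(a, c)\<in>H. pair k a x \<ge> c})"

text \<open>face_y(P): the set of minimisers of <-,y> on P (empty if the minimum is not attained).\<close>
definition face_at :: "nat \<Rightarrow> (nat \<Rightarrow> rat) set \<Rightarrow> (nat \<Rightarrow> rat) \<Rightarrow> (nat \<Rightarrow> rat) set" where
  "face_at k P y = {x \<in> P. \<forall>z\<in>P. pair k x y \<le> pair k z y}"

definition is_face :: "nat \<Rightarrow> (nat \<Rightarrow> rat) set \<Rightarrow> (nat \<Rightarrow> rat) set \<Rightarrow> bool" where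
  "is_face k P F \<longleftrightarrow> (\<exists>y\<in>qvec k. F = face_at k P y \<and> F \<noteq> {})"

definition normal_cone :: "nat \<Rightarrow> (nat \<Rightarrow> rat) set \<Rightarrow> (nat \<Rightarrow> rat) set \<Rightarrow> (nat \<Rightarrow> rat) set" where
  "normal_cone k P F = {y \<in> qvec k. F \<subseteq> face_at k P y}"

definition dual_cone :: "nat \<Rightarrow> (nat \<Rightarrow> rat) set \<Rightarrow> (nat \<Rightarrow> rat) set" where
  "dual_cone k \<sigma> = {x \<in> qvec k. \<forall>y\<in>\<sigma>. pair k x y \<ge> 0}"

definition aff_hull :: "nat \<Rightarrow> (nat \<Rightarrow> rat) set \<Rightarrow> (nat \<Rightarrow> rat) set" where
  "aff_hull k S = {y \<in> qvec k. \<exists>(N::nat) (c::nat \<Rightarrow> rat) v. (\<forall>j<N. v j \<in> S) \<and>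
      (\<Sum>j<N. c j) = 1 \<and> y = (\<lambda>i. \<Sum>j<N. c j * v j i)}"

definition diff_span :: "nat \<Rightarrow> (nat \<Rightarrow> rat) set \<Rightarrow> (nat \<Rightarrow> rat) set" where
  "diff_span k S = {y \<in> qvec k. \<exists>(N::nat) (c::nat \<Rightarrow> rat) v w. (\<forall>j<N. v j \<in> S \<and> w j \<in> S) \<and>
      y = (\<lambda>i. \<Sum>j<N. c j * (v j i - w j i))}"

definition rel_interior_q :: "nat \<Rightarrow> (nat \<Rightarrow> rat) set \<Rightarrow> (nat \<Rightarrow> rat) set" where
  "rel_interior_q k S = {x \<in> S. \<exists>e>0. \<forall>y\<in>aff_hull k S.
      (\<Sum>i<k. (y i - x i)^2) < e^2 \<longrightarrow> y \<in> S}"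

text \<open>M-stable face, where M_Q is the image of Q^m under i.\<close>
definition M_stable :: "nat \<Rightarrow> nat \<Rightarrow> (nat \<Rightarrow> nat \<Rightarrow> int) \<Rightarrow> (nat \<Rightarrow> rat) set \<Rightarrow> bool" where
  "M_stable m n i F \<longleftrightarrow>
     (\<exists>x\<in>rel_interior_q n F. x \<in> mapQ n m i ` qvec m) \<and>
     {(\<lambda>j. u j + v j) | u v. u \<in> diff_span n F \<and> v \<in> mapQ n m i ` qvec m} = qvec n"

end

theory Submission
  imports Defs
begin

text \<open>Write \<open>I\<close> for the map \<open>M_Q \<rightarrow> \<Lambda>_Q\<close>. The transpose of \<open>I\<close> sends \<open>N_F P\<close> into
  \<open>N_{F_M} P_M\<close>, which gives one inclusion. Conversely, pick \<open>x\<^sub>0 = I x\<^sub>0'\<close> in the relative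
  interior of \<open>F\<close>. A defining inequality of \<open>P\<close> that is tight at \<open>x\<^sub>0\<close> is tight on all
  of \<open>F\<close>, so its normal lies in \<open>N_F P\<close>; hence every \<open>w\<close> in \<open>(N_F P)\<^sup>\<or>\<close> is a feasible
  direction at \<open>x\<^sub>0\<close>, i.e. \<open>x\<^sub>0 + \<epsilon> w \<in> P\<close> for some \<open>\<epsilon> > 0\<close>. If \<open>w = I x\<close>, then
  \<open>x\<^sub>0' + \<epsilon> x \<in> P_M\<close> with \<open>x\<^sub>0' \<in> F_M\<close>, which forces \<open>x \<in> (N_{F_M} P_M)\<^sup>\<or>\<close>.\<close>

definition adjQ :: "nat \<Rightarrow> nat \<Rightarrow> (nat \<Rightarrow> nat \<Rightarrow> int) \<Rightarrow> (nat \<Rightarrow> rat) \<Rightarrow> (nat \<Rightarrow> rat)" where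
  "adjQ n m A y = (\<lambda>j. if j < m then (\<Sum>k<n. of_int (A k j) * y k) else 0)"

lemma pair_commute: "pair k x y = pair k y x"
  by (simp add: pair_def mult.commute)

lemma pair_mapQ_eq_pair_adjQ: "pair n (mapQ n m A x) y = pair m x (adjQ n m A y)"
proof -
  have "pair n (mapQ n m A x) y = (\<Sum>k<n. \<Sum>j<m. of_int (A k j) * x j * y k)"
    by (simp add: pair_def mapQ_def sum_distrib_right)
  also have "\<dots> = (\<Sum>j<m. \<Sum>k<n. of_int (A k j) * x j * y k)"
    by (rule sum.swap)
  also have "\<dots> = pair m x (adjQ n m A y)"
    by (simp add: pair_def adjQ_def sum_distrib_left mult_ac)
  finally show ?thesis .
qed

lemma adjQ_in_qvec: "adjQ n m A y \<in> qvec m"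
  by (simp add: qvec_def adjQ_def)

lemma mapQ_in_qvec: "mapQ n m A x \<in> qvec n"
  by (simp add: qvec_def mapQ_def)

lemma mapQ_add_scaled:
  "mapQ n m A (\<lambda>j. u j + e * v j) = (\<lambda>k. mapQ n m A u k + e * mapQ n m A v k)"
  by (auto simp: mapQ_def sum.distrib sum_distrib_left algebra_simps)

lemma pair_add_scaled_left: "pair k (\<lambda>j. u j + e * v j) y = pair k u y + e * pair k v y"
  by (simp add: pair_def sum.distrib sum_distrib_left algebra_simps)

lemma pair_add_scaled_right: "pair k a (\<lambda>j. u j + e * v j) = pair k a u + e * pair k a v"
  by (simp add: pair_def sum.distrib sum_distrib_left algebra_simps)

lemma adjQ_normal_cone_preimage:
  assumes "y \<in> normal_cone n P F"
  shows "adjQ n m A y \<in> normal_cone m {x \<in> qvec m. mapQ n m A x \<in> P}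
                                       {x \<in> qvec m. mapQ n m A x \<in> F}"
  using assms
  by (auto simp: normal_cone_def face_at_def adjQ_in_qvec pair_mapQ_eq_pair_adjQ[symmetric])

lemma mapQ_dual_normal_cone_preimage_subset:
  "mapQ n m A ` dual_cone m (normal_cone m {x \<in> qvec m. mapQ n m A x \<in> P}
                                           {x \<in> qvec m. mapQ n m A x \<in> F})
   \<subseteq> dual_cone n (normal_cone n P F) \<inter> mapQ n m A ` qvec m"
  using adjQ_normal_cone_preimage
  by (fastforce simp: dual_cone_def mapQ_in_qvec pair_mapQ_eq_pair_adjQ)

text \<open>Extrapolating from \<open>z\<close> through \<open>x\<^sub>0\<close> a little beyond \<open>x\<^sub>0\<close> stays in \<open>F\<close>; there the
  linear form would drop below \<open>c\<close> if it exceeded \<open>c\<close> at \<open>z\<close>.\<close>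
lemma rel_interior_tight_constraint:
  assumes x0: "x0 \<in> rel_interior_q n F" and F: "F \<subseteq> qvec n"
    and ge: "\<forall>x\<in>F. pair n a x \<ge> c" and tight: "pair n a x0 = c" and z: "z \<in> F"
  shows "pair n a z = c"
proof (rule ccontr)
  assume "pair n a z \<noteq> c"
  with ge z have gt: "pair n a z > c" by force
  from x0 obtain e where e: "e > 0" and x0F: "x0 \<in> F"
    and ball: "\<forall>y\<in>aff_hull n F. (\<Sum>i<n. (y i - x0 i)^2) < e^2 \<longrightarrow> y \<in> F"
    unfolding rel_interior_q_def by blast
  define D where "D = (\<Sum>i<n. (z i - x0 i)^2)"
  have D0: "D \<ge> 0" unfolding D_def by (intro sum_nonneg) auto
  define t where "t = e / (D + 1)"
  have t0: "t > 0" using e D0 by (simp add: t_def)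
  define p where "p = (\<lambda>i. (1 + t) * x0 i - t * z i)"
  have "x0 \<in> qvec n" "z \<in> qvec n" using F x0F z by auto
  then have "p \<in> qvec n" by (simp add: qvec_def p_def)
  then have p_aff: "p \<in> aff_hull n F"
    unfolding aff_hull_def
    using x0F z
    by (auto intro!: exI[of _ 2] exI[of _ "\<lambda>j. if j = 0 then 1 + t else - t"]
                     exI[of _ "\<lambda>j. if j = 0 then x0 else z"]
             simp: p_def eval_nat_numeral lessThan_Suc fun_eq_iff)
  have "(\<Sum>i<n. (p i - x0 i)^2) = t^2 * D"
    unfolding D_def sum_distrib_left
    by (rule sum.cong) (auto simp: p_def power2_eq_square algebra_simps)
  also have "\<dots> = e^2 * (D / (D + 1)^2)"
    by (simp add: t_def power_divide)
  also have "\<dots> < e^2"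
  proof -
    have "(D + 1)^2 = D * D + 2 * D + 1" by (simp add: power2_eq_square algebra_simps)
    then have "D < (D + 1)^2" using D0 mult_nonneg_nonneg[OF D0 D0] by linarith
    then have "D / (D + 1)^2 < 1" using D0 by simp
    then have "e^2 * (D / (D + 1)^2) < e^2 * 1" using e by (intro mult_strict_left_mono) auto
    then show ?thesis by simp
  qed
  finally have "p \<in> F" using ball p_aff by blast
  then have "pair n a p \<ge> c" using ge by blast
  moreover have "pair n a p = pair n a x0 - t * (pair n a z - pair n a x0)"
    by (simp add: pair_def p_def sum_subtractf sum.distrib sum_distrib_left algebra_simps)
  ultimately have "t * (pair n a z - c) \<le> 0" using tight by simp
  with t0 gt show False by (simp add: mult_le_0_iff)
qed

lemma finite_constraints_step:
  assumes "finite H"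
    and "\<forall>(a, c)\<in>H. pair k a x0 \<ge> c"
    and "\<forall>(a, c)\<in>H. pair k a x0 = c \<longrightarrow> pair k a w \<ge> 0"
  shows "\<exists>\<epsilon>>0. \<forall>\<delta>. 0 < \<delta> \<and> \<delta> \<le> \<epsilon> \<longrightarrow> (\<forall>(a, c)\<in>H. pair k a (\<lambda>j. x0 j + \<delta> * w j) \<ge> c)"
  using assms
proof (induction H rule: finite_induct)
  case empty
  then show ?case by (intro exI[of _ 1]) auto
next
  case (insert h H)
  obtain a c where h: "h = (a, c)" by fastforce
  from insert obtain \<epsilon> where \<epsilon>: "\<epsilon> > 0"
    and step_H: "\<forall>\<delta>. 0 < \<delta> \<and> \<delta> \<le> \<epsilon> \<longrightarrow> (\<forall>(a, c)\<in>H. pair k a (\<lambda>j. x0 j + \<delta> * w j) \<ge> c)"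
    by auto
  have "\<exists>\<eta>>0. \<forall>\<delta>. 0 < \<delta> \<and> \<delta> \<le> \<eta> \<longrightarrow> pair k a (\<lambda>j. x0 j + \<delta> * w j) \<ge> c"
  proof (cases "pair k a x0 = c")
    case True
    then have "pair k a w \<ge> 0" using insert.prems h by auto
    then show ?thesis using True by (intro exI[of _ 1]) (auto simp: pair_add_scaled_right)
  next
    case False
    with insert.prems h have slack: "pair k a x0 - c > 0" by auto
    define \<eta> where "\<eta> = (pair k a x0 - c) / (\<bar>pair k a w\<bar> + 1)"
    have \<eta>0: "\<eta> > 0" using slack by (simp add: \<eta>_def)
    have \<eta>_bound: "\<eta> * \<bar>pair k a w\<bar> < pair k a x0 - c"
    proof -
      have "\<eta> * (\<bar>pair k a w\<bar> + 1) = pair k a x0 - c"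
        by (simp add: \<eta>_def add_nonneg_eq_0_iff)
      then show ?thesis using \<eta>0 by (simp add: algebra_simps)
    qed
    show ?thesis
    proof (intro exI[of _ \<eta>] conjI \<eta>0 allI impI)
      fix \<delta> :: rat assume \<delta>: "0 < \<delta> \<and> \<delta> \<le> \<eta>"
      have "\<delta> * \<bar>pair k a w\<bar> \<le> \<eta> * \<bar>pair k a w\<bar>"
        using \<delta> by (intro mult_right_mono) auto
      moreover have "\<delta> * (- \<bar>pair k a w\<bar>) \<le> \<delta> * pair k a w"
        using \<delta> by (intro mult_left_mono) auto
      ultimately show "pair k a (\<lambda>j. x0 j + \<delta> * w j) \<ge> c"
        using \<eta>_bound by (simp add: pair_add_scaled_right)
    qed
  qed
  then obtain \<eta> where "\<eta> > 0"
    and "\<forall>\<delta>. 0 < \<delta> \<and> \<delta> \<le> \<eta> \<longrightarrow> pair k a (\<lambda>j. x0 j + \<delta> * w j) \<ge> c"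
    by blast
  with \<epsilon> step_H h show ?case by (intro exI[of _ "min \<epsilon> \<eta>"]) auto
qed

lemma tight_constraint_in_normal_cone:
  assumes P: "P = {x \<in> qvec n. \<forall>(a, c)\<in>H. pair n a x \<ge> c}" and ac: "(a, c) \<in> H"
    and a: "a \<in> qvec n" and FP: "F \<subseteq> P"
    and x0: "x0 \<in> rel_interior_q n F" and tight: "pair n a x0 = c"
  shows "a \<in> normal_cone n P F"
proof -
  have "pair n a u = c" if "u \<in> F" for u
    using rel_interior_tight_constraint[OF x0 _ _ tight that] FP P ac by blast
  moreover have "pair n a z \<ge> c" if "z \<in> P" for z
    using that P ac by auto
  ultimately show ?thesis
    using a FP by (auto simp: normal_cone_def face_at_def pair_commute[of n _ a])
qed

lemma dual_normal_cone_feasible_direction: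
  assumes poly: "polyhedron n P" and FP: "F \<subseteq> P"
    and x0: "x0 \<in> rel_interior_q n F" and w: "w \<in> dual_cone n (normal_cone n P F)"
  shows "\<exists>\<epsilon>>0. (\<lambda>j. x0 j + \<epsilon> * w j) \<in> P"
proof -
  from poly obtain H where H: "finite H" "\<forall>(a, c)\<in>H. a \<in> qvec n"
    and P: "P = {x \<in> qvec n. \<forall>(a, c)\<in>H. pair n a x \<ge> c}"
    unfolding polyhedron_def by blast
  have "x0 \<in> P" using x0 FP by (auto simp: rel_interior_q_def)
  then have feasible: "\<forall>(a, c)\<in>H. pair n a x0 \<ge> c" and x0_qvec: "x0 \<in> qvec n"
    using P by auto
  have "\<forall>(a, c)\<in>H. pair n a x0 = c \<longrightarrow> pair n a w \<ge> 0"
    using tight_constraint_in_normal_cone[OF P _ _ FP x0] H(2) w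
    by (fastforce simp: dual_cone_def pair_commute[of n _ w])
  with finite_constraints_step[OF H(1) feasible]
  obtain \<epsilon> where "\<epsilon> > 0" and "\<forall>(a, c)\<in>H. pair n a (\<lambda>j. x0 j + \<epsilon> * w j) \<ge> c"
    by (meson order_refl)
  moreover have "(\<lambda>j. x0 j + \<epsilon> * w j) \<in> qvec n"
    using x0_qvec w by (simp add: qvec_def dual_cone_def)
  ultimately show ?thesis using P by blast
qed

lemma feasible_direction_in_dual_normal_cone:
  assumes "x0 \<in> F" and "(\<lambda>j. x0 j + \<epsilon> * x j) \<in> P" and "\<epsilon> > 0" and "x \<in> qvec k"
  shows "x \<in> dual_cone k (normal_cone k P F)"
  unfolding dual_cone_def
proof (intro CollectI conjI ballI \<open>x \<in> qvec k\<close>)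
  fix y assume "y \<in> normal_cone k P F"
  then have "pair k x0 y \<le> pair k (\<lambda>j. x0 j + \<epsilon> * x j) y"
    using assms(1,2) by (auto simp: normal_cone_def face_at_def)
  then show "0 \<le> pair k x y"
    using \<open>\<epsilon> > 0\<close> by (simp add: pair_add_scaled_left zero_le_mult_iff)
qed

lemma dual_normal_cone_preimage_supset:
  assumes poly: "polyhedron n P" and FP: "F \<subseteq> P"
    and x0': "x0' \<in> qvec m" "mapQ n m A x0' \<in> rel_interior_q n F"
  shows "dual_cone n (normal_cone n P F) \<inter> mapQ n m A ` qvec m
         \<subseteq> mapQ n m A ` dual_cone m (normal_cone m {x \<in> qvec m. mapQ n m A x \<in> P}
                                                  {x \<in> qvec m. mapQ n m A x \<in> F})"
proof
  fix w assume "w \<in> dual_cone n (normal_cone n P F) \<inter> mapQ n m A ` qvec m"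
  then obtain x where w: "w \<in> dual_cone n (normal_cone n P F)" and x: "x \<in> qvec m"
    and w_eq: "w = mapQ n m A x" by blast
  obtain \<epsilon> where \<epsilon>: "\<epsilon> > 0" and step: "(\<lambda>j. mapQ n m A x0' j + \<epsilon> * w j) \<in> P"
    using dual_normal_cone_feasible_direction[OF poly FP x0'(2) w] by blast
  have "x0' \<in> {y \<in> qvec m. mapQ n m A y \<in> F}"
    using x0' by (simp add: rel_interior_q_def)
  moreover have "mapQ n m A (\<lambda>j. x0' j + \<epsilon> * x j) \<in> P"
    using step by (simp add: mapQ_add_scaled w_eq)
  then have "(\<lambda>j. x0' j + \<epsilon> * x j) \<in> {y \<in> qvec m. mapQ n m A y \<in> P}"
    using x0'(1) x by (simp add: qvec_def)
  ultimately have "x \<in> dual_cone m (normal_cone m {y \<in> qvec m. mapQ n m A y \<in> P}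
                                                  {y \<in> qvec m. mapQ n m A y \<in> F})"
    by (rule feasible_direction_in_dual_normal_cone[OF _ _ \<epsilon> x])
  then show "w \<in> mapQ n m A ` dual_cone m (normal_cone m {y \<in> qvec m. mapQ n m A y \<in> P}
                                                       {y \<in> qvec m. mapQ n m A y \<in> F})"
    unfolding w_eq by (rule imageI)
qed

theorem mainTheorem6:
  fixes m n b :: nat
    and i d :: "nat \<Rightarrow> nat \<Rightarrow> int"
    and P F :: "(nat \<Rightarrow> rat) set"
  assumes exact: "short_exact m n b i d"
    and poly: "polyhedron n P"
    and face: "is_face n P F"
    and stable: "M_stable m n i F"
  shows "mapQ n m i ` dual_cone m (normal_cone m {x \<in> qvec m. mapQ n m i x \<in> P}
                                                 {x \<in> qvec m. mapQ n m i x \<in> F})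
         = dual_cone n (normal_cone n P F) \<inter> mapQ n m i ` qvec m"
proof -
  have "F \<subseteq> P" using face by (auto simp: is_face_def face_at_def)
  moreover obtain x0' where "x0' \<in> qvec m" "mapQ n m i x0' \<in> rel_interior_q n F"
    using stable unfolding M_stable_def by blast
  ultimately show ?thesis
    by (intro equalityI mapQ_dual_normal_cone_preimage_subset
              dual_normal_cone_preimage_supset[OF poly])
qed

end
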